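(* Every $\lambda^\star$-practical number is $\lambda$-practical.
   Context: $\lambda$ is the Carmichael function ($\lambda(n)$ is the least positive integer $m$ with $a^m\equiv1\pmod n$ for all $a$ coprime to $n$) and $\varphi$ is Euler's totient. A positive integer $n$ is $\lambda^\star$-practical if every positive integer $m\le\sum_{d\mid n}\lambda(d)$ can be written as $\sum_{d\in\mathcal{D}}\lambda(d)$ for some set $\mathcal{D}$ of distinct positive divisors of $n$. A positive integer $n$ is $\lambda$-practical if every integer $m$ with $1\le m\le n$ can be written as $m=\sum_{d\mid n}\lambda(d)m_d$ with integers $0\le m_d\le \varphi(d)/\lambda(d)$. *)

theory Defs
  imports "HOL-Number_Theory.Number_Theory"
begin

definition carmichael :: "nat \<Rightarrow> nat" where
  "carmichael n = (LEAST m. m > 0 \<and> (\<forall>a::nat. coprime a n \<longrightarrow> [a ^ m = 1] (mod n)))"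

definition lambda_star_practical :: "nat \<Rightarrow> bool" where
  "lambda_star_practical n \<longleftrightarrow> n > 0 \<and>
     (\<forall>m::nat. 1 \<le> m \<and> m \<le> (\<Sum>d\<in>{d. d dvd n}. carmichael d) \<longrightarrow>
        (\<exists>D. D \<subseteq> {d. d dvd n} \<and> m = (\<Sum>d\<in>D. carmichael d)))"

definition lambda_practical :: "nat \<Rightarrow> bool" where
  "lambda_practical n \<longleftrightarrow> n > 0 \<and>
     (\<forall>m::nat. 1 \<le> m \<and> m \<le> n \<longrightarrow>
        (\<exists>c::nat \<Rightarrow> nat. (\<forall>d. d dvd n \<longrightarrow> c d \<le> totient d div carmichael d) \<and>
            m = (\<Sum>d\<in>{d. d dvd n}. carmichael d * c d)))"

end

theory Submission
  imports Defs
begin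

text \<open>
  Since \<open>\<lambda>(d)\<close> divides \<open>\<phi>(d)\<close>, we have \<open>n = \<Sum>\<^bsub>d | n\<^esub> \<lambda>(d) \<cdot> (\<phi>(d)/\<lambda>(d))\<close> with
  every multiplicity \<open>\<phi>(d)/\<lambda>(d) \<ge> 1\<close>. So it suffices that if every number up to \<open>\<Sum> w\<^sub>i\<close> is a
  subset sum of the weights \<open>w\<^sub>i\<close>, then every number up to \<open>\<Sum> w\<^sub>i b\<^sub>i\<close> is a sum
  \<open>\<Sum> w\<^sub>i c\<^sub>i\<close> with \<open>c\<^sub>i \<le> b\<^sub>i\<close>, for any bounds \<open>b\<^sub>i \<ge> 1\<close>. Raising one bound \<open>b\<^sub>j\<close> by one
  preserves this: a target above the old maximum is reached by using \<open>w\<^sub>j\<close> once more,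
  and the rest lies below the old maximum because \<open>w\<^sub>j\<close> is part of it.
\<close>

definition bounded_sums :: "'a set \<Rightarrow> ('a \<Rightarrow> nat) \<Rightarrow> ('a \<Rightarrow> nat) \<Rightarrow> nat set" where
  "bounded_sums I w b = {m. \<exists>c. (\<forall>i\<in>I. c i \<le> b i) \<and> m = (\<Sum>i\<in>I. w i * c i)}"

lemma bounded_sums_mono:
  assumes "\<forall>i\<in>I. b i \<le> b' i"
  shows "bounded_sums I w b \<subseteq> bounded_sums I w b'"
  using assms unfolding bounded_sums_def by (auto intro: order_trans)

lemma bounded_sums_cong:
  assumes "\<forall>i\<in>I. b i = b' i"
  shows "bounded_sums I w b = bounded_sums I w b'"
  using assms by (intro equalityI bounded_sums_mono) auto

lemma subset_sum_in_bounded_sums: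
  assumes "finite I" and "D \<subseteq> I"
  shows "sum w D \<in> bounded_sums I w (\<lambda>_. 1)"
proof -
  have "(\<Sum>i\<in>I. w i * of_bool (i \<in> D)) = sum w D"
    using assms by (simp add: sum.inter_restrict Int_absorb1 flip: sum.inter_filter)
  then show ?thesis
    unfolding bounded_sums_def by (intro CollectI exI[of _ "\<lambda>i. of_bool (i \<in> D)"]) auto
qed

lemma sum_fun_upd_Suc:
  fixes w :: "'a \<Rightarrow> nat"
  assumes "finite I" and "j \<in> I"
  shows "(\<Sum>i\<in>I. w i * (c(j := c j + 1)) i) = (\<Sum>i\<in>I. w i * c i) + w j"
proof -
  have "(\<Sum>i\<in>I. w i * (c(j := c j + 1)) i) = (\<Sum>i\<in>I. w i * c i + (if i = j then w j else 0))"
    by (intro sum.cong) auto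
  also have "\<dots> = (\<Sum>i\<in>I. w i * c i) + w j"
    using assms by (simp add: sum.distrib)
  finally show ?thesis .
qed

lemma bounded_sums_raise_bound:
  fixes w :: "'a \<Rightarrow> nat"
  assumes "finite I" and "j \<in> I"
    and all: "{..(\<Sum>i\<in>I. w i * b i)} \<subseteq> bounded_sums I w b"
    and small: "w j \<le> (\<Sum>i\<in>I. w i * b i)"
  shows "{..(\<Sum>i\<in>I. w i * b i) + w j} \<subseteq> bounded_sums I w (b(j := b j + 1))"
proof
  fix m assume m: "m \<in> {..(\<Sum>i\<in>I. w i * b i) + w j}"
  show "m \<in> bounded_sums I w (b(j := b j + 1))"
  proof (cases "m \<le> (\<Sum>i\<in>I. w i * b i)")
    case True
    then have "m \<in> bounded_sums I w b"
      using all by auto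
    moreover have "\<forall>i\<in>I. b i \<le> (b(j := b j + 1)) i"
      by simp
    ultimately show ?thesis
      using bounded_sums_mono by blast
  next
    case False
    then have "m - w j \<in> bounded_sums I w b"
      using all m by auto
    then obtain c where c: "\<forall>i\<in>I. c i \<le> b i" "m - w j = (\<Sum>i\<in>I. w i * c i)"
      unfolding bounded_sums_def by auto
    have "m = (\<Sum>i\<in>I. w i * (c(j := c j + 1)) i)"
      using c(2) False small sum_fun_upd_Suc[OF assms(1,2)] by simp
    moreover have "\<forall>i\<in>I. (c(j := c j + 1)) i \<le> (b(j := b j + 1)) i"
      using c(1) by simp
    ultimately show ?thesis
      unfolding bounded_sums_def by blast
  qed
qed

lemma bounded_sums_if_subset_sums:
  fixes w :: "'a \<Rightarrow> nat"
  assumes "finite I"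
    and subset_sums: "{..sum w I} \<subseteq> bounded_sums I w (\<lambda>_. 1)"
    and "\<forall>i\<in>I. 1 \<le> b i"
  shows "{..(\<Sum>i\<in>I. w i * b i)} \<subseteq> bounded_sums I w b"
  using assms(3)
proof (induction "\<Sum>i\<in>I. b i - 1" arbitrary: b)
  case 0
  then have "\<forall>i\<in>I. b i = 1"
    using \<open>finite I\<close> by (auto simp: le_antisym)
  then show ?case
    using subset_sums bounded_sums_cong[of I b "\<lambda>_. 1" w] by simp
next
  case (Suc k)
  have "\<exists>j\<in>I. b j - 1 \<noteq> 0"
    using Suc.hyps(2) by (metis nat.distinct(1) sum.neutral)
  then obtain j where j: "j \<in> I" "2 \<le> b j"
    by auto
  define b' where "b' = b(j := b j - 1)"
  have b: "b = b'(j := b' j + 1)"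
    using j by (auto simp: b'_def)
  have b'_pos: "\<forall>i\<in>I. 1 \<le> b' i"
    using Suc.prems j by (simp add: b'_def)
  have "(\<Sum>i\<in>I. b i - 1) = (\<Sum>i\<in>I. (b' i - 1) + (if i = j then 1 else 0))"
    using j b'_pos by (intro sum.cong) (auto simp: b'_def)
  then have "k = (\<Sum>i\<in>I. b' i - 1)"
    using Suc.hyps(2) \<open>finite I\<close> j by (simp add: sum.distrib)
  then have IH: "{..(\<Sum>i\<in>I. w i * b' i)} \<subseteq> bounded_sums I w b'"
    using Suc.hyps(1) b'_pos by blast
  have "w j \<le> w j * b' j"
    using b'_pos j by simp
  also have "\<dots> \<le> (\<Sum>i\<in>I. w i * b' i)"
    using \<open>finite I\<close> j by (intro member_le_sum) auto
  finally have "{..(\<Sum>i\<in>I. w i * b' i) + w j} \<subseteq> bounded_sums I w b"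
    unfolding b by (rule bounded_sums_raise_bound[OF \<open>finite I\<close> j(1) IH])
  then show ?case
    using sum_fun_upd_Suc[OF \<open>finite I\<close> j(1), of w b'] b by simp
qed

lemma carmichael_pos_and_cong_one:
  assumes "d > 0"
  shows "carmichael d > 0 \<and> (\<forall>a::nat. coprime a d \<longrightarrow> [a ^ carmichael d = 1] (mod d))"
  unfolding carmichael_def
proof (rule LeastI[of _ "totient d"])
  show "totient d > 0 \<and> (\<forall>a::nat. coprime a d \<longrightarrow> [a ^ totient d = 1] (mod d))"
    using assms euler_theorem by auto
qed

lemma carmichael_dvd_totient:
  assumes "d > 0"
  shows "carmichael d dvd totient d"
proof -
  let ?L = "carmichael d"
  define r where "r = totient d mod ?L"
  have L: "?L > 0" "\<And>a. coprime a d \<Longrightarrow> [a ^ ?L = 1] (mod d)"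
    using carmichael_pos_and_cong_one[OF assms] by auto
  have r_exponent: "[a ^ r = 1] (mod d)" if "coprime a d" for a :: nat
  proof -
    have "[1 = a ^ totient d] (mod d)"
      using euler_theorem that by (simp add: cong_sym)
    also have "a ^ totient d = (a ^ ?L) ^ (totient d div ?L) * a ^ r"
      by (simp add: r_def flip: power_mult power_add)
    also have "[\<dots> = 1 ^ (totient d div ?L) * a ^ r] (mod d)"
      by (intro cong_mult cong_pow L(2) that cong_refl)
    finally show ?thesis
      by (simp add: cong_sym)
  qed
  have "r = 0"
  proof (rule ccontr)
    assume "r \<noteq> 0"
    then have "?L \<le> r"
      unfolding carmichael_def using r_exponent by (intro Least_le) auto
    moreover have "r < ?L"
      unfolding r_def using L(1) by simp
    ultimately show False
      by simp
  qed
  then show ?thesis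
    unfolding r_def by auto
qed

lemma carmichael_multiplicity:
  assumes "d > 0"
  shows "carmichael d * (totient d div carmichael d) = totient d"
    and "1 \<le> totient d div carmichael d"
proof -
  have "carmichael d dvd totient d" "carmichael d > 0" "totient d > 0"
    using carmichael_dvd_totient[OF assms] carmichael_pos_and_cong_one[OF assms] assms by auto
  then show "carmichael d * (totient d div carmichael d) = totient d"
    and "1 \<le> totient d div carmichael d"
    by (auto simp: Suc_le_eq div_greater_zero_iff dvd_imp_le)
qed

theorem corollary5p6:
  fixes n :: nat
  assumes "lambda_star_practical n"
  shows "lambda_practical n"
proof -
  let ?I = "{d. d dvd n}"
  have "n > 0" and fin: "finite ?I"
    using assms by (auto simp: lambda_star_practical_def)
  then have divisor_pos: "\<forall>d\<in>?I. d > 0"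
    by (auto intro: Nat.gr0I)
  have "{..sum carmichael ?I} \<subseteq> bounded_sums ?I carmichael (\<lambda>_. 1)"
  proof
    fix m assume "m \<in> {..sum carmichael ?I}"
    then obtain D where "D \<subseteq> ?I" "m = sum carmichael D"
      using assms unfolding lambda_star_practical_def
      by (cases "m = 0") (metis empty_subsetI sum.empty, auto simp: Suc_le_eq)
    then show "m \<in> bounded_sums ?I carmichael (\<lambda>_. 1)"
      using subset_sum_in_bounded_sums[OF fin] by simp
  qed
  moreover have "(\<Sum>d\<in>?I. carmichael d * (totient d div carmichael d)) = n"
    using divisor_pos carmichael_multiplicity(1) totient_divisor_sum by simp
  ultimately have "{..n} \<subseteq> bounded_sums ?I carmichael (\<lambda>d. totient d div carmichael d)"
    using bounded_sums_if_subset_sums[OF fin] divisor_pos carmichael_multiplicity(2) by metis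
  then show ?thesis
    using \<open>n > 0\<close> unfolding lambda_practical_def bounded_sums_def by auto
qed

end
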